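(* Let $0<\alpha_0\le\alpha<2$, $c_l,c_U>0$, let $\Omega\subset\mathbb{R}^d$ be bounded and open, and assume that $k$ satisfies condition (E$_\ge$) with constant $c_l$ and condition (U1) with constant $c_U$. Let $\varepsilon\in(0,1/2)$ be the constant of the small-term property. Let $y_0\in\Omega$, $r<\operatorname{dist}(y_0,\partial\Omega)/2$, $\rho<\varepsilon r/2$, and let $\eta:\mathbb{R}^d\to[0,1]$ be a smooth function with $\eta=1$ on $A^r_{\varepsilon r}(y_0)$, $\eta=0$ on $\mathbb{R}^d\setminus A^{3r/2}_{\varepsilon r/2}(y_0)$ and $|\nabla\eta|\le\frac4\varepsilon r^{-1}$. There is a constant $C$ depending only on $d,c_l,c_U,\alpha_0$ such that $$\int_{\mathbb{R}^d\setminus A^{3r/2}_{\varepsilon r/2}(y_0)}\int_{A^{3r/2}_{\varepsilon r/2}(y_0)}G_\rho(x,y_0)\eta^2(y)k(x,y)\,dy\,dx\le Cr^{d-\alpha}\sup_{A^{3r/2}_{\varepsilon r/2}(y_0)}G_\rho(\cdot,y_0),$$ and in particular $$\int_{\mathbb{R}^d\setminus A^{3r/2}_{\varepsilon r/2}(y_0)}\int_{A^{r}_{\varepsilon r}(y_0)}G_\rho(x,y_0)k(x,y)\,dy\,dx\le Cr^{d-\alpha}\sup_{A^{3r/2}_{\varepsilon r/2}(y_0)}G_\rho(\cdot,y_0).$$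
   Context: Throughout, $d\ge 3$ and $k:(\mathbb{R}^d\times\mathbb{R}^d)\setminus\{x=y\}\to[0,\infty)$ is a measurable function with $k(x,y)=k(y,x)$ and $\sup_{x\in\mathbb{R}^d}\int_{\mathbb{R}^d}(1\wedge|y-x|^2)k(x,y)\,dy<\infty$. For an open set $U\subset\mathbb{R}^d$ and measurable $u,v$, $\mathcal{E}_U(u,v)=\int_U\int_U(u(y)-u(x))(v(y)-v(x))k(x,y)\,dy\,dx$ (when finite), and $\mathcal{E}=\mathcal{E}_{\mathbb{R}^d}$. For $0<\alpha<2$ let $k^{(\alpha)}(x,y)=\frac{2^\alpha\Gamma((d+\alpha)/2)}{\pi^{d/2}|\Gamma(-\alpha/2)|}|y-x|^{-d-\alpha}$ and let $\mathcal{E}^\alpha_U$, $\mathcal{E}^\alpha$ denote the same forms with $k$ replaced by $k^{(\alpha)}$. $H(\mathbb{R}^d;k)=\{u\in L^2(\mathbb{R}^d):\mathcal{E}(u,u)<\infty\}$ and, for open $\Omega$, $H_\Omega(\mathbb{R}^d;k)=\{u\in H(\mathbb{R}^d;k): u=0\text{ a.e. on }\mathbb{R}^d\setminus\Omega\}$. Condition (E$_\ge$) with constant $c_l>0$: for every ball $B=B_r(x_0)\subset\mathbb{R}^d$ and every $u\in L^2(B)$, $\mathcal{E}_B(u,u)\ge c_l\,\mathcal{E}^\alpha_B(u,u)$. Condition (U1) with constant $c_U>0$: for all $r>0$, $\sup_{x\in\mathbb{R}^d}\int_{\mathbb{R}^d}(r^2\wedge|y-x|^2)k(x,y)\,dy\le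 c_U r^{2-\alpha}$. Regularized Green function: for bounded open $\Omega$, $k$ satisfying (E$_\ge$), $y_0\in\Omega$ and $\rho>0$ with $B_\rho(y_0)\subset\Omega$, $G_\rho(\cdot,y_0)$ denotes the unique function in $H_\Omega(\mathbb{R}^d;k)$ with $\mathcal{E}(G_\rho(\cdot,y_0),\varphi)=\fint_{B_\rho(y_0)}\varphi\,dx$ for all $\varphi\in H_\Omega(\mathbb{R}^d;k)$; it is nonnegative (and continuous in $\Omega\setminus\overline{B_\rho(y_0)}$). Annuli: $A^R_s(y_0)=B_R(y_0)\setminus B_s(y_0)$. The constant $\varepsilon$ (small-term property): $\varepsilon\in(0,1/2)$ is a number depending only on $d,c_l,c_U,\alpha_0$ such that $\int_{B_{\varepsilon r}(y_0)}\int_{\mathbb{R}^d\setminus B_r(y_0)}G_\rho(x,y_0)k(x,y)\,dy\,dx\le 1/4$ for all $y_0\in\Omega$, $r<\operatorname{dist}(y_0,\partial\Omega)$ and $\rho>0$ with $B_\rho(y_0)\subset\Omega$. *)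

theory Defs
  imports "HOL-Analysis.Analysis"
begin

definition kernel_std :: "('a::euclidean_space \<Rightarrow> 'a \<Rightarrow> real) \<Rightarrow> bool" where
  "kernel_std k \<longleftrightarrow>
     (\<lambda>(x,y). k x y) \<in> borel_measurable (lborel \<Otimes>\<^sub>M lborel) \<and>
     (\<forall>x y. x \<noteq> y \<longrightarrow> 0 \<le> k x y \<and> k x y = k y x) \<and>
     (SUP x. \<integral>\<^sup>+ y. ennreal (min 1 ((norm (y - x))\<^sup>2) * k x y) \<partial>lborel) < \<infinity>"

definition kalpha :: "real \<Rightarrow> 'a::euclidean_space \<Rightarrow> 'a \<Rightarrow> real" where
  "kalpha \<alpha> x y =
     2 powr \<alpha> * Gamma ((real DIM('a) + \<alpha>) / 2)
       / (pi powr (real DIM('a) / 2) * \<bar>Gamma (- \<alpha> / 2)\<bar>)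
       * norm (y - x) powr (- real DIM('a) - \<alpha>)"

definition Eq :: "'a::euclidean_space set \<Rightarrow> ('a \<Rightarrow> 'a \<Rightarrow> real) \<Rightarrow> ('a \<Rightarrow> real) \<Rightarrow> ennreal" where
  "Eq U k u = (\<integral>\<^sup>+ x. indicator U x *
       (\<integral>\<^sup>+ y. indicator U y * ennreal ((u y - u x)\<^sup>2 * k x y) \<partial>lborel) \<partial>lborel)"

definition Ebil :: "('a::euclidean_space \<Rightarrow> 'a \<Rightarrow> real) \<Rightarrow> ('a \<Rightarrow> real) \<Rightarrow> ('a \<Rightarrow> real) \<Rightarrow> real" where
  "Ebil k u v = (\<integral> x. (\<integral> y. (u y - u x) * (v y - v x) * k x y \<partial>lborel) \<partial>lborel)"

definition L2on :: "'a::euclidean_space set \<Rightarrow> ('a \<Rightarrow> real) \<Rightarrow> bool" where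
  "L2on B u \<longleftrightarrow> u \<in> borel_measurable lborel \<and>
     (\<integral>\<^sup>+ x. indicator B x * ennreal ((u x)\<^sup>2) \<partial>lborel) < \<infinity>"

definition cond_Ege :: "real \<Rightarrow> real \<Rightarrow> ('a::euclidean_space \<Rightarrow> 'a \<Rightarrow> real) \<Rightarrow> bool" where
  "cond_Ege cl \<alpha> k \<longleftrightarrow> (\<forall>x0 r u. L2on (ball x0 r) u \<longrightarrow>
      Eq (ball x0 r) k u \<ge> ennreal cl * Eq (ball x0 r) (kalpha \<alpha>) u)"

definition cond_U1 :: "real \<Rightarrow> real \<Rightarrow> ('a::euclidean_space \<Rightarrow> 'a \<Rightarrow> real) \<Rightarrow> bool" where
  "cond_U1 cU \<alpha> k \<longleftrightarrow> (\<forall>r>0. \<forall>x.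
      (\<integral>\<^sup>+ y. ennreal (min (r\<^sup>2) ((norm (y - x))\<^sup>2) * k x y) \<partial>lborel) \<le> ennreal (cU * r powr (2 - \<alpha>)))"

definition H_space :: "('a::euclidean_space \<Rightarrow> 'a \<Rightarrow> real) \<Rightarrow> ('a \<Rightarrow> real) \<Rightarrow> bool" where
  "H_space k u \<longleftrightarrow> L2on UNIV u \<and> Eq UNIV k u < \<infinity>"

definition H_Omega :: "'a::euclidean_space set \<Rightarrow> ('a \<Rightarrow> 'a \<Rightarrow> real) \<Rightarrow> ('a \<Rightarrow> real) \<Rightarrow> bool" where
  "H_Omega \<Omega> k u \<longleftrightarrow> H_space k u \<and> (AE x in lborel. x \<notin> \<Omega> \<longrightarrow> u x = 0)"

text \<open>G is (the nonnegative representative, continuous off the closed ball, of) the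
  regularized Green function G_rho(., y0) of k on Omega.\<close>
definition is_reg_green :: "('a::euclidean_space \<Rightarrow> 'a \<Rightarrow> real) \<Rightarrow> 'a set \<Rightarrow> 'a \<Rightarrow> real \<Rightarrow> ('a \<Rightarrow> real) \<Rightarrow> bool" where
  "is_reg_green k \<Omega> y0 \<rho> G \<longleftrightarrow>
     H_Omega \<Omega> k G \<and>
     (\<forall>\<phi>. H_Omega \<Omega> k \<phi> \<longrightarrow>
        Ebil k G \<phi> = (\<integral> x. indicator (ball y0 \<rho>) x * \<phi> x \<partial>lborel) / measure lborel (ball y0 \<rho>)) \<and>
     (\<forall>x. 0 \<le> G x) \<and> continuous_on (\<Omega> - cball y0 \<rho>) G"

definition annulus :: "'a::metric_space \<Rightarrow> real \<Rightarrow> real \<Rightarrow> 'a set" where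
  "annulus y0 R s = ball y0 R - ball y0 s"

fun partials :: "nat \<Rightarrow> ('a::euclidean_space \<Rightarrow> real) \<Rightarrow> ('a \<Rightarrow> real) set" where
  "partials 0 f = {f}"
| "partials (Suc n) f = {(\<lambda>x. frechet_derivative g (at x) b) | g b. g \<in> partials n f \<and> b \<in> Basis}"

definition smooth_fun :: "('a::euclidean_space \<Rightarrow> real) \<Rightarrow> bool" where
  "smooth_fun f \<longleftrightarrow> (\<forall>n. \<forall>g\<in>partials n f. \<forall>x. g differentiable (at x))"

end

theory Submission
  imports Defs
begin

text \<open>
  Let \<open>A\<close> be the outer annulus, \<open>M \<ge> sup\<^sub>A G\<close>, and test the equation of the regularized Green
  function with \<open>\<phi> = \<eta>\<^sup>2 (2M - G)\<close>. As \<open>\<phi>\<close> vanishes on the ball of radius \<open>\<rho>\<close>, \<open>E(G, \<phi>) = 0\<close>.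
  Pointwise, \<open>(G y - G x) (\<phi> y - \<phi> x) + M G x (\<eta> y)\<^sup>2 \<le> 4 M\<^sup>2 (\<eta> y - \<eta> x)\<^sup>2\<close> whenever
  \<open>\<eta> x = 0\<close> (and the same without the second term otherwise). Integrating against \<open>k\<close>, the
  integral \<open>T\<close> of \<open>G x (\<eta> y)\<^sup>2 k x y\<close> over \<open>(- A) \<times> A\<close> satisfies
  \<open>M T \<le> 4 M\<^sup>2 E(\<eta>, \<eta>) \<le> 8 M\<^sup>2 |A| c\<^sub>U L\<^sup>\<alpha>\<close> by (U1), where \<open>L = 4 / (\<epsilon> r)\<close> is the Lipschitz
  constant of \<open>\<eta>\<close>. Divide by \<open>M\<close>, let \<open>M\<close> decrease to \<open>sup\<^sub>A G\<close>, and use \<open>|A| \<le> C r\<^sup>d\<close>.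
\<close>

section \<open>Pointwise inequalities for the test function\<close>

text \<open>In this section \<open>a, b, g1, g0\<close> stand for \<open>\<eta> y, \<eta> x, G y, G x\<close>, so that
  \<open>a\<^sup>2 (2M - g1) - b\<^sup>2 (2M - g0)\<close> is the increment \<open>\<phi> y - \<phi> x\<close> of the test function.\<close>

lemma cutoff_test_pairing_bound_bounded:
  fixes g0 g1 a b M :: real
  assumes "0 \<le> g0" "g0 \<le> M" "0 \<le> g1" "g1 \<le> M" "0 \<le> a" "a \<le> 1" "0 \<le> b" "b \<le> 1"
  shows "(g1 - g0) * (a\<^sup>2 * (2*M - g1) - b\<^sup>2 * (2*M - g0)) \<le> 4 * M\<^sup>2 * (a - b)\<^sup>2"
proof -
  define c where "c = (4*M - g1 - g0) / 2"
  have c: "0 \<le> c" "c \<le> 2*M" using assms by (auto simp: c_def)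
  have "(g1 - g0) * (a\<^sup>2 * (2*M - g1) - b\<^sup>2 * (2*M - g0))
      = (g1 - g0) * (a + b) * (c * (a - b)) - (a\<^sup>2 + b\<^sup>2) * (g1 - g0)\<^sup>2 / 2"
    by (simp add: c_def power2_eq_square field_simps)
  also have "\<dots> \<le> (c * (a - b))\<^sup>2"
  proof -
    have "(c * (a - b))\<^sup>2 - ((g1 - g0) * (a + b) * (c * (a - b)) - (a\<^sup>2 + b\<^sup>2) * (g1 - g0)\<^sup>2 / 2)
        = ((g1 - g0) * (a + b) / 2 - c * (a - b))\<^sup>2 + (g1 - g0)\<^sup>2 * (a - b)\<^sup>2 / 4"
      by (simp add: power2_eq_square field_simps)
    moreover have "0 \<le> ((g1 - g0) * (a + b) / 2 - c * (a - b))\<^sup>2 + (g1 - g0)\<^sup>2 * (a - b)\<^sup>2 / 4"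
      by simp
    ultimately show ?thesis by linarith
  qed
  also have "\<dots> \<le> (2*M)\<^sup>2 * (a - b)\<^sup>2"
    unfolding power_mult_distrib[of c] using c by (intro mult_right_mono power_mono) auto
  finally show ?thesis by (simp add: power_mult_distrib)
qed

lemma cutoff_test_pairing_bound:
  fixes g0 g1 a b M :: real
  assumes "0 \<le> g0" "0 \<le> g1" "0 \<le> a" "a \<le> 1" "0 \<le> b" "b \<le> 1" "0 < M"
    and "a \<noteq> 0 \<Longrightarrow> g1 \<le> M" and "b \<noteq> 0 \<Longrightarrow> g0 \<le> M"
  shows "M * (if b = 0 then g0 * a\<^sup>2 else 0) + (g1 - g0) * (a\<^sup>2 * (2*M - g1) - b\<^sup>2 * (2*M - g0))
           \<le> 4 * M\<^sup>2 * (a - b)\<^sup>2"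
proof (cases "a = 0 \<or> b = 0")
  case False
  then show ?thesis using assms cutoff_test_pairing_bound_bounded[of g0 M g1 a b] by auto
next
  case True
  then consider "a = 0" "b = 0" | "a = 0" "b \<noteq> 0" | "a \<noteq> 0" "b = 0" by blast
  then show ?thesis
  proof cases
    case 2
    then have "g0 \<le> M" using assms by blast
    have "(g1 - g0) * (- b\<^sup>2 * (2*M - g0)) = (g0 - g1) * (2*M - g0) * b\<^sup>2" by (simp add: algebra_simps)
    also have "\<dots> \<le> M * (2*M) * b\<^sup>2"
      using assms \<open>g0 \<le> M\<close> by (intro mult_right_mono mult_mono) auto
    also have "\<dots> \<le> 4 * M\<^sup>2 * (a - b)\<^sup>2"
      using 2 \<open>0 < M\<close> zero_le_mult_iff[of "M\<^sup>2" "b\<^sup>2"] by (simp add: power2_eq_square)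
    finally show ?thesis using 2 by simp
  next
    case 3
    then have "g1 \<le> M" using assms by blast
    have "M * (g0 * a\<^sup>2) + (g1 - g0) * (a\<^sup>2 * (2*M - g1)) = (g1 * (2*M - g1) - g0 * (M - g1)) * a\<^sup>2"
      by (simp add: algebra_simps)
    also have "\<dots> \<le> (M * (2*M)) * a\<^sup>2"
    proof (intro mult_right_mono)
      have "g1 * (2*M - g1) \<le> M * (2*M)" using assms \<open>g1 \<le> M\<close> by (intro mult_mono) auto
      moreover have "0 \<le> g0 * (M - g1)" using assms \<open>g1 \<le> M\<close> by auto
      ultimately show "g1 * (2*M - g1) - g0 * (M - g1) \<le> M * (2*M)" by linarith
    qed simp
    also have "\<dots> \<le> 4 * M\<^sup>2 * (a - b)\<^sup>2"
      using 3 \<open>0 < M\<close> zero_le_mult_iff[of "M\<^sup>2" "a\<^sup>2"] by (simp add: power2_eq_square)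
    finally show ?thesis using 3 by simp
  qed simp
qed

lemma cutoff_test_increment_bound_bounded:
  fixes g0 g1 a b M :: real
  assumes "0 \<le> g0" "g0 \<le> M" "0 \<le> a" "a \<le> 1" "0 \<le> b" "b \<le> 1"
  shows "(a\<^sup>2 * (2*M - g1) - b\<^sup>2 * (2*M - g0))\<^sup>2 \<le> 2 * (g1 - g0)\<^sup>2 + 32 * M\<^sup>2 * (a - b)\<^sup>2"
proof -
  have "\<bar>a\<^sup>2 * (2*M - g1) - b\<^sup>2 * (2*M - g0)\<bar> = \<bar>(2*M - g0) * (a + b) * (a - b) - a\<^sup>2 * (g1 - g0)\<bar>"
    by (simp add: power2_eq_square algebra_simps)
  also have "\<dots> \<le> 4 * M * \<bar>a - b\<bar> + \<bar>g1 - g0\<bar>"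
  proof (rule order.trans[OF abs_triangle_ineq4 add_mono])
    have "(2*M - g0) * (a + b) \<le> (2*M) * 2" using assms by (intro mult_mono) auto
    moreover have "0 \<le> (2*M - g0) * (a + b)" using assms by simp
    ultimately have "\<bar>(2*M - g0) * (a + b)\<bar> \<le> (2*M) * 2" by simp
    then show "\<bar>(2*M - g0) * (a + b) * (a - b)\<bar> \<le> 4 * M * \<bar>a - b\<bar>"
      by (simp add: abs_mult mult_right_mono)
    have "a\<^sup>2 \<le> 1" using assms by (simp add: power_le_one)
    then show "\<bar>a\<^sup>2 * (g1 - g0)\<bar> \<le> \<bar>g1 - g0\<bar>" by (simp add: abs_mult mult_left_le_one_le)
  qed
  finally have "(a\<^sup>2 * (2*M - g1) - b\<^sup>2 * (2*M - g0))\<^sup>2 \<le> (4 * M * \<bar>a - b\<bar> + \<bar>g1 - g0\<bar>)\<^sup>2"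
    by (metis abs_ge_zero power2_abs power_mono)
  also have "\<dots> \<le> 2 * (4 * M * \<bar>a - b\<bar>)\<^sup>2 + 2 * \<bar>g1 - g0\<bar>\<^sup>2"
  proof -
    have "(u + v)\<^sup>2 \<le> 2 * u\<^sup>2 + 2 * v\<^sup>2" for u v :: real
      using zero_le_power2[of "u - v"] by (simp add: power2_eq_square algebra_simps)
    then show ?thesis .
  qed
  also have "\<dots> = 2 * (g1 - g0)\<^sup>2 + 32 * M\<^sup>2 * (a - b)\<^sup>2"
    by (simp add: power_mult_distrib)
  finally show ?thesis .
qed

lemma cutoff_test_increment_bound:
  fixes g0 g1 a b M :: real
  assumes "0 \<le> g0" "0 \<le> g1" "0 \<le> a" "a \<le> 1" "0 \<le> b" "b \<le> 1"
    and "a \<noteq> 0 \<Longrightarrow> g1 \<le> M" and "b \<noteq> 0 \<Longrightarrow> g0 \<le> M"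
  shows "(a\<^sup>2 * (2*M - g1) - b\<^sup>2 * (2*M - g0))\<^sup>2 \<le> 2 * (g1 - g0)\<^sup>2 + 32 * M\<^sup>2 * (a - b)\<^sup>2"
proof -
  consider "g0 \<le> M" | "g1 \<le> M" | "a = 0" "b = 0" using assms by force
  then show ?thesis
  proof cases
    case 1
    then show ?thesis using assms by (intro cutoff_test_increment_bound_bounded) auto
  next
    case 2
    \<comment> \<open>the bound is symmetric under swapping \<open>(a, g1)\<close> with \<open>(b, g0)\<close>\<close>
    then have "(b\<^sup>2 * (2*M - g0) - a\<^sup>2 * (2*M - g1))\<^sup>2 \<le> 2 * (g0 - g1)\<^sup>2 + 32 * M\<^sup>2 * (b - a)\<^sup>2"
      using assms by (intro cutoff_test_increment_bound_bounded) auto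
    then show ?thesis by (simp add: power2_commute)
  qed simp
qed

lemma ennreal_le_mult_if_le_all_greater:
  fixes X :: ennreal and c s :: real
  assumes "0 \<le> c" "0 \<le> s" and le: "\<And>M. s < M \<Longrightarrow> X \<le> ennreal (c * M)"
  shows "X \<le> ennreal (c * s)"
proof (rule ennreal_le_epsilon)
  fix e :: real assume "0 < e"
  have "X \<le> ennreal (c * (s + e / (c + 1)))"
    using \<open>0 < e\<close> \<open>0 \<le> c\<close> by (intro le) simp
  also have "\<dots> \<le> ennreal (c * s + e)"
  proof (intro ennreal_leI)
    have "c * (e / (c + 1)) \<le> e" using \<open>0 < e\<close> \<open>0 \<le> c\<close> by (simp add: field_simps)
    then show "c * (s + e / (c + 1)) \<le> c * s + e" by (simp add: distrib_left)
  qed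
  finally show "X \<le> ennreal (c * s) + ennreal e"
    using \<open>0 < e\<close> assms(1,2) by (simp add: ennreal_plus)
qed

lemma ennreal_add_le_add_neg:
  fixes f g h :: real
  assumes "0 \<le> h" and "h + f \<le> g"
  shows "ennreal h + ennreal f \<le> ennreal g + ennreal (- f)"
proof (cases "0 \<le> f")
  case True
  then have "ennreal h + ennreal f = ennreal (h + f)" using assms by (simp add: ennreal_plus)
  also have "\<dots> \<le> ennreal g" using assms by (intro ennreal_leI) simp
  finally show ?thesis by (simp add: add_increasing2)
next
  case False
  then have "ennreal h \<le> ennreal (max 0 g + - f)" using assms by (intro ennreal_leI) simp
  also have "\<dots> = ennreal g + ennreal (- f)"
    using False ennreal_plus[of "max 0 g" "- f"] by (cases "0 \<le> g") (auto simp: max_def ennreal_neg)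
  finally show ?thesis using False by (simp add: ennreal_neg)
qed

lemma (in pair_sigma_finite) iterated_nn_integral_pos_eq_neg:
  fixes f :: "'a \<Rightarrow> 'b \<Rightarrow> real"
  assumes f[measurable]: "(\<lambda>(x,y). f x y) \<in> borel_measurable (M1 \<Otimes>\<^sub>M M2)"
    and abs_fin: "(\<integral>\<^sup>+x. \<integral>\<^sup>+y. ennreal \<bar>f x y\<bar> \<partial>M2 \<partial>M1) < \<infinity>"
    and zero: "(\<integral>x. \<integral>y. f x y \<partial>M2 \<partial>M1) = 0"
  shows "(\<integral>\<^sup>+x. \<integral>\<^sup>+y. ennreal (f x y) \<partial>M2 \<partial>M1) = (\<integral>\<^sup>+x. \<integral>\<^sup>+y. ennreal (- f x y) \<partial>M2 \<partial>M1)"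
proof -
  have iterated: "(\<integral>\<^sup>+x. \<integral>\<^sup>+y. ennreal (g x y) \<partial>M2 \<partial>M1) = (\<integral>\<^sup>+p. ennreal (case_prod g p) \<partial>(M1 \<Otimes>\<^sub>M M2))"
    if "(\<lambda>(x,y). g x y) \<in> borel_measurable (M1 \<Otimes>\<^sub>M M2)" for g :: "'a \<Rightarrow> 'b \<Rightarrow> real"
    using M2.nn_integral_fst[of "\<lambda>p. ennreal (case_prod g p)"] that by simp
  have pos_fin: "(\<integral>\<^sup>+x. \<integral>\<^sup>+y. ennreal (f x y) \<partial>M2 \<partial>M1) < \<infinity>"
    and neg_fin: "(\<integral>\<^sup>+x. \<integral>\<^sup>+y. ennreal (- f x y) \<partial>M2 \<partial>M1) < \<infinity>"
    by (rule le_less_trans[OF _ abs_fin]; intro nn_integral_mono; simp)+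
  have int: "integrable (M1 \<Otimes>\<^sub>M M2) (\<lambda>(x,y). f x y)"
    using abs_fin iterated[of "\<lambda>x y. \<bar>f x y\<bar>"]
    by (intro integrableI_bounded) (auto simp: case_prod_beta')
  have "0 = integral\<^sup>L (M1 \<Otimes>\<^sub>M M2) (\<lambda>(x,y). f x y)"
    using integral_fst[OF int] zero by simp
  also have "\<dots> = enn2real (\<integral>\<^sup>+p. ennreal (case_prod f p) \<partial>(M1 \<Otimes>\<^sub>M M2))
      - enn2real (\<integral>\<^sup>+p. ennreal (- case_prod f p) \<partial>(M1 \<Otimes>\<^sub>M M2))"
    by (rule real_lebesgue_integral_def[OF int])
  finally have "enn2real (\<integral>\<^sup>+x. \<integral>\<^sup>+y. ennreal (f x y) \<partial>M2 \<partial>M1)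
      = enn2real (\<integral>\<^sup>+x. \<integral>\<^sup>+y. ennreal (- f x y) \<partial>M2 \<partial>M1)"
    using iterated[of f] iterated[of "\<lambda>x y. - f x y"] by (simp add: case_prod_beta')
  then show ?thesis
    using ennreal_enn2real[OF pos_fin[unfolded infinity_ennreal_def]]
      ennreal_enn2real[OF neg_fin[unfolded infinity_ennreal_def]] by metis
qed

lemma (in pair_sigma_finite) iterated_nn_integral_le_if_integral_zero:
  fixes f g h :: "'a \<Rightarrow> 'b \<Rightarrow> real"
  assumes [measurable]: "(\<lambda>(x,y). f x y) \<in> borel_measurable (M1 \<Otimes>\<^sub>M M2)"
    "(\<lambda>(x,y). g x y) \<in> borel_measurable (M1 \<Otimes>\<^sub>M M2)"
    "(\<lambda>(x,y). h x y) \<in> borel_measurable (M1 \<Otimes>\<^sub>M M2)"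
    and abs_fin: "(\<integral>\<^sup>+x. \<integral>\<^sup>+y. ennreal \<bar>f x y\<bar> \<partial>M2 \<partial>M1) < \<infinity>"
    and zero: "(\<integral>x. \<integral>y. f x y \<partial>M2 \<partial>M1) = 0"
    and h_nonneg: "\<And>x y. 0 \<le> h x y"
    and le: "\<And>x y. h x y + f x y \<le> g x y"
  shows "(\<integral>\<^sup>+x. \<integral>\<^sup>+y. ennreal (h x y) \<partial>M2 \<partial>M1) \<le> (\<integral>\<^sup>+x. \<integral>\<^sup>+y. ennreal (g x y) \<partial>M2 \<partial>M1)"
proof -
  define P where "P = (\<integral>\<^sup>+x. \<integral>\<^sup>+y. ennreal (f x y) \<partial>M2 \<partial>M1)"
  have P_fin: "P < \<infinity>"
    unfolding P_def by (rule le_less_trans[OF _ abs_fin]) (intro nn_integral_mono, simp)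
  have "ennreal (h x y) + ennreal (f x y) \<le> ennreal (g x y) + ennreal (- f x y)" for x y
    using h_nonneg le by (rule ennreal_add_le_add_neg)
  then have "(\<integral>\<^sup>+x. \<integral>\<^sup>+y. ennreal (h x y) \<partial>M2 \<partial>M1) + P
      \<le> (\<integral>\<^sup>+x. \<integral>\<^sup>+y. ennreal (g x y) \<partial>M2 \<partial>M1) + (\<integral>\<^sup>+x. \<integral>\<^sup>+y. ennreal (- f x y) \<partial>M2 \<partial>M1)"
    unfolding P_def by (simp add: nn_integral_add[symmetric] nn_integral_mono)
  also have "(\<integral>\<^sup>+x. \<integral>\<^sup>+y. ennreal (- f x y) \<partial>M2 \<partial>M1) = P"
    unfolding P_def using iterated_nn_integral_pos_eq_neg[OF _ abs_fin zero] by simp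
  finally show ?thesis using P_fin by (auto simp: ennreal_add_left_cancel_le add.commute less_top)
qed

lemma nn_integral_inner_le_cutoff:
  assumes "B \<subseteq> A" and "\<And>y. y \<in> B \<Longrightarrow> \<eta> y = 1"
  shows "(\<integral>\<^sup>+x. indicator C x * (\<integral>\<^sup>+y. indicator B y * ennreal (G x * k x y) \<partial>N) \<partial>M)
    \<le> (\<integral>\<^sup>+x. indicator C x * (\<integral>\<^sup>+y. indicator A y * ennreal (G x * (\<eta> y)\<^sup>2 * k x y) \<partial>N) \<partial>M)"
  using assms by (intro nn_integral_mono mult_left_mono) (auto simp: indicator_def subset_eq)

lemma SUP_ennreal_continuous_compact:
  fixes G :: "'a::metric_space \<Rightarrow> real"
  assumes "continuous_on K G" "compact K" "A \<subseteq> K"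
  obtains s where "0 \<le> s" "(SUP x\<in>A. ennreal (G x)) = ennreal s"
proof -
  obtain B where B: "\<And>x. x \<in> K \<Longrightarrow> norm (G x) \<le> B"
    using compact_imp_bounded[OF compact_continuous_image[OF assms(1,2)]] by (auto simp: bounded_iff)
  have "(SUP x\<in>A. ennreal (G x)) \<le> ennreal B"
    using B assms(3) by (intro SUP_least ennreal_leI) force
  then have "(SUP x\<in>A. ennreal (G x)) < top" using ennreal_less_top le_less_trans by blast
  then show ?thesis using that[of "enn2real (SUP x\<in>A. ennreal (G x))"] by simp
qed

lemma lipschitz_on_borel_measurable:
  fixes f :: "'a::euclidean_space \<Rightarrow> real"
  assumes "L-lipschitz_on UNIV f"
  shows "f \<in> borel_measurable lborel"
  using lipschitz_on_continuous_on[OF assms] by (simp add: borel_measurable_continuous_onI)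

lemma ball_infdist_frontier_subset:
  fixes y0 :: "'a::euclidean_space"
  assumes "y0 \<in> \<Omega>"
  shows "ball y0 (infdist y0 (frontier \<Omega>)) \<subseteq> \<Omega>"
proof
  fix z assume z: "z \<in> ball y0 (infdist y0 (frontier \<Omega>))"
  show "z \<in> \<Omega>"
  proof (rule ccontr)
    assume "z \<notin> \<Omega>"
    then obtain w where w: "w \<in> closed_segment y0 z" "w \<in> frontier \<Omega>"
      using connected_Int_frontier[of "closed_segment y0 z" \<Omega>] assms by auto
    then have "infdist y0 (frontier \<Omega>) \<le> dist y0 z"
      using infdist_le[OF w(2), of y0] dist_in_closed_segment[OF w(1)] by (simp add: dist_commute)
    then show False using z by simp
  qed
qed

lemma annulus_mono: "r' \<le> r \<Longrightarrow> s \<le> s' \<Longrightarrow> annulus y0 r' s' \<subseteq> annulus y0 r s"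
  unfolding annulus_def by auto

lemma emeasure_annulus_le:
  fixes y0 :: "'a::euclidean_space"
  assumes "0 \<le> R"
  shows "emeasure lborel (annulus y0 R s) \<le> ennreal (unit_ball_vol DIM('a) * R ^ DIM('a))"
  using emeasure_mono[of "annulus y0 R s" "ball y0 R" lborel] assms
  by (simp add: annulus_def emeasure_ball Diff_subset)

lemma smooth_fun_lipschitz_on:
  fixes \<eta> :: "'a::euclidean_space \<Rightarrow> real"
  assumes "smooth_fun \<eta>" and bound: "\<And>x. onorm (frechet_derivative \<eta> (at x)) \<le> L"
  shows "L-lipschitz_on UNIV \<eta>"
proof -
  have deriv: "(\<eta> has_derivative frechet_derivative \<eta> (at x)) (at x)" for x
    using assms(1) unfolding smooth_fun_def by (metis frechet_derivative_works partials.simps(1) singletonI)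
  have "0 \<le> L"
    using onorm_pos_le[OF has_derivative_bounded_linear[OF deriv]] bound by (rule order_trans)
  moreover have "dist (\<eta> x) (\<eta> y) \<le> L * dist x y" for x y
    using differentiable_bound[of UNIV \<eta> "\<lambda>x. frechet_derivative \<eta> (at x)" L x y] deriv bound
    by (simp add: dist_norm)
  ultimately show ?thesis by (intro lipschitz_onI)
qed

section \<open>Energy estimates for the kernel\<close>

lemma Eq_UNIV: "Eq UNIV k u = (\<integral>\<^sup>+x. \<integral>\<^sup>+y. ennreal ((u y - u x)\<^sup>2 * k x y) \<partial>lborel \<partial>lborel)"
  unfolding Eq_def by simp

lemma kernel_stdD:
  assumes "kernel_std k"
  shows kernel_std_measurable: "(\<lambda>(x,y). k x y) \<in> borel_measurable (lborel \<Otimes>\<^sub>M lborel)"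
    and kernel_std_nonneg: "x \<noteq> y \<Longrightarrow> 0 \<le> k x y"
    and kernel_std_sym: "k x y = k y x"
    and kernel_std_increment_nonneg: "0 \<le> (u y - u x)\<^sup>2 * k x y"
  using assms unfolding kernel_std_def by (cases "x = y"; auto)+

lemma cutoff_energy_density_le:
  fixes k :: "'a::euclidean_space \<Rightarrow> 'a \<Rightarrow> real"
  assumes k: "kernel_std k" and U1: "cond_U1 cU \<alpha> k"
    and lip: "L-lipschitz_on UNIV \<eta>" and "0 < L" and range: "\<And>x. \<eta> x \<in> {0..1}"
  shows "(\<integral>\<^sup>+y. ennreal ((\<eta> y - \<eta> x)\<^sup>2 * k x y) \<partial>lborel) \<le> ennreal (cU * L powr \<alpha>)"
proof -
  have [measurable]: "k x \<in> borel_measurable lborel"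
    using measurable_Pair2[OF kernel_std_measurable[OF k], of x] by simp
  have pointwise: "(\<eta> y - \<eta> x)\<^sup>2 * k x y \<le> L\<^sup>2 * (min ((1/L)\<^sup>2) ((norm (y - x))\<^sup>2) * k x y)" for y
  proof (cases "x = y")
    case False
    then have "0 \<le> k x y" by (rule kernel_std_nonneg[OF k])
    have "\<bar>\<eta> y - \<eta> x\<bar> \<le> 1" using range[of x] range[of y] by auto
    then have "(\<eta> y - \<eta> x)\<^sup>2 \<le> 1" using abs_le_square_iff[of "\<eta> y - \<eta> x" 1] by simp
    moreover have "(\<eta> y - \<eta> x)\<^sup>2 \<le> (L * norm (y - x))\<^sup>2"
      using lipschitz_onD[OF lip, of y x] by (simp add: abs_le_square_iff[symmetric] dist_real_def dist_norm)
    ultimately have "(\<eta> y - \<eta> x)\<^sup>2 \<le> L\<^sup>2 * min ((1/L)\<^sup>2) ((norm (y - x))\<^sup>2)"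
      using \<open>0 < L\<close> by (simp add: min_def power_mult_distrib power_divide)
    then show ?thesis using \<open>0 \<le> k x y\<close> by (metis mult.assoc mult_right_mono)
  qed simp
  have "(\<integral>\<^sup>+y. ennreal ((\<eta> y - \<eta> x)\<^sup>2 * k x y) \<partial>lborel)
      \<le> (\<integral>\<^sup>+y. ennreal (L\<^sup>2) * ennreal (min ((1/L)\<^sup>2) ((norm (y - x))\<^sup>2) * k x y) \<partial>lborel)"
    by (intro nn_integral_mono) (simp add: ennreal_mult'[symmetric] pointwise ennreal_leI)
  also have "\<dots> = ennreal (L\<^sup>2) * (\<integral>\<^sup>+y. ennreal (min ((1/L)\<^sup>2) ((norm (y - x))\<^sup>2) * k x y) \<partial>lborel)"
    by (intro nn_integral_cmult) measurable
  also have "\<dots> \<le> ennreal (L\<^sup>2) * ennreal (cU * (1/L) powr (2 - \<alpha>))"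
    using U1 \<open>0 < L\<close> unfolding cond_U1_def by (intro mult_left_mono) auto
  also have "\<dots> = ennreal (cU * L powr \<alpha>)"
  proof -
    have "L\<^sup>2 * (cU * (1/L) powr (2 - \<alpha>)) = cU * L powr \<alpha>"
      using \<open>0 < L\<close> by (simp add: powr_divide powr_diff field_simps)
    moreover have "ennreal (L\<^sup>2) * ennreal (cU * (1/L) powr (2 - \<alpha>)) = ennreal (L\<^sup>2 * (cU * (1/L) powr (2 - \<alpha>)))"
      by (rule ennreal_mult'[symmetric]) simp
    ultimately show ?thesis by metis
  qed
  finally show ?thesis .
qed

lemma cutoff_energy_le:
  fixes k :: "'a::euclidean_space \<Rightarrow> 'a \<Rightarrow> real"
  assumes k: "kernel_std k" and U1: "cond_U1 cU \<alpha> k"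
    and lip: "L-lipschitz_on UNIV \<eta>" and "0 < L" and range: "\<And>x. \<eta> x \<in> {0..1}"
    and A_sets[measurable]: "A \<in> sets lborel" and supp: "\<And>x. x \<notin> A \<Longrightarrow> \<eta> x = 0"
  shows "Eq UNIV k \<eta> \<le> 2 * emeasure lborel A * ennreal (cU * L powr \<alpha>)"
proof -
  note [measurable] = kernel_std_measurable[OF k] lipschitz_on_borel_measurable[OF lip]
  define D where "D x y = ennreal ((\<eta> y - \<eta> x)\<^sup>2 * k x y)" for x y
  define c where "c = ennreal (cU * L powr \<alpha>)"
  have D_sym: "D x y = D y x" for x y
    unfolding D_def by (simp add: kernel_std_sym[OF k, of x y] power2_commute)
  have half: "(\<integral>\<^sup>+x. \<integral>\<^sup>+y. indicator A x * D x y \<partial>lborel \<partial>lborel) \<le> emeasure lborel A * c"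
  proof -
    have "(\<integral>\<^sup>+x. \<integral>\<^sup>+y. indicator A x * D x y \<partial>lborel \<partial>lborel)
        = (\<integral>\<^sup>+x. indicator A x * (\<integral>\<^sup>+y. D x y \<partial>lborel) \<partial>lborel)"
      unfolding D_def by (intro nn_integral_cong nn_integral_cmult) measurable
    also have "\<dots> \<le> (\<integral>\<^sup>+x. c * indicator A x \<partial>lborel)"
      using cutoff_energy_density_le[OF k U1 lip \<open>0 < L\<close> range]
      by (intro nn_integral_mono) (auto simp: indicator_def D_def c_def)
    also have "\<dots> = c * emeasure lborel A" by (rule nn_integral_cmult_indicator[OF A_sets])
    finally show ?thesis by (simp add: mult.commute)
  qed
  \<comment> \<open>By symmetry of \<open>k\<close>, pairs with \<open>y \<in> A\<close> contribute as much as pairs with \<open>x \<in> A\<close>.\<close>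
  have "Eq UNIV k \<eta> \<le> (\<integral>\<^sup>+x. \<integral>\<^sup>+y. indicator A x * D x y + indicator A y * D x y \<partial>lborel \<partial>lborel)"
    unfolding Eq_UNIV by (intro nn_integral_mono) (auto simp: D_def indicator_def supp)
  also have "\<dots> = (\<integral>\<^sup>+x. \<integral>\<^sup>+y. indicator A x * D x y \<partial>lborel \<partial>lborel)
      + (\<integral>\<^sup>+x. \<integral>\<^sup>+y. indicator A y * D x y \<partial>lborel \<partial>lborel)"
    unfolding D_def by (simp add: nn_integral_add)
  also have "(\<integral>\<^sup>+x. \<integral>\<^sup>+y. indicator A y * D x y \<partial>lborel \<partial>lborel)
      = (\<integral>\<^sup>+y. \<integral>\<^sup>+x. indicator A y * D x y \<partial>lborel \<partial>lborel)"
    unfolding D_def by (rule lborel_pair.Fubini'[symmetric]) measurable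
  also have "\<dots> = (\<integral>\<^sup>+x. \<integral>\<^sup>+y. indicator A x * D x y \<partial>lborel \<partial>lborel)"
    by (intro nn_integral_cong) (simp add: D_sym)
  also have "\<dots> + \<dots> \<le> emeasure lborel A * c + emeasure lborel A * c"
    using half half by (rule add_mono)
  finally show ?thesis by (simp add: c_def mult_2 distrib_right)
qed

lemma Ebil_integrand_abs_le:
  fixes k :: "'a::euclidean_space \<Rightarrow> 'a \<Rightarrow> real"
  assumes k: "kernel_std k"
    and [measurable]: "u \<in> borel_measurable lborel" "v \<in> borel_measurable lborel"
  shows "(\<integral>\<^sup>+x. \<integral>\<^sup>+y. ennreal \<bar>(u y - u x) * (v y - v x) * k x y\<bar> \<partial>lborel \<partial>lborel)
    \<le> Eq UNIV k u + Eq UNIV k v"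
proof -
  note [measurable] = kernel_std_measurable[OF k]
  have pointwise: "\<bar>(u y - u x) * (v y - v x) * k x y\<bar> \<le> (u y - u x)\<^sup>2 * k x y + (v y - v x)\<^sup>2 * k x y"
    for x y
  proof (cases "x = y")
    case False
    then have "0 \<le> k x y" by (rule kernel_std_nonneg[OF k])
    have "\<bar>a * b\<bar> \<le> a\<^sup>2 + b\<^sup>2" for a b :: real
    proof -
      have "2 * (\<bar>a\<bar> * \<bar>b\<bar>) \<le> a\<^sup>2 + b\<^sup>2"
        using zero_le_power2[of "\<bar>a\<bar> - \<bar>b\<bar>"] by (simp add: power2_eq_square algebra_simps)
      then show ?thesis
        unfolding abs_mult using mult_nonneg_nonneg[OF abs_ge_zero abs_ge_zero, of a b] by linarith
    qed
    from mult_right_mono[OF this \<open>0 \<le> k x y\<close>] show ?thesis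
      using \<open>0 \<le> k x y\<close> by (simp add: abs_mult distrib_right)
  qed simp
  have "(\<integral>\<^sup>+x. \<integral>\<^sup>+y. ennreal \<bar>(u y - u x) * (v y - v x) * k x y\<bar> \<partial>lborel \<partial>lborel)
      \<le> (\<integral>\<^sup>+x. \<integral>\<^sup>+y. ennreal ((u y - u x)\<^sup>2 * k x y) + ennreal ((v y - v x)\<^sup>2 * k x y) \<partial>lborel \<partial>lborel)"
    using pointwise kernel_std_increment_nonneg[OF k]
    by (intro nn_integral_mono) (simp add: ennreal_plus[symmetric] ennreal_leI del: ennreal_plus)
  also have "\<dots> = Eq UNIV k u + Eq UNIV k v"
    unfolding Eq_UNIV by (simp add: nn_integral_add)
  finally show ?thesis .
qed

lemma Eq_cutoff_test_function_le:
  fixes k :: "'a::euclidean_space \<Rightarrow> 'a \<Rightarrow> real"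
  assumes k: "kernel_std k"
    and [measurable]: "G \<in> borel_measurable lborel" "\<eta> \<in> borel_measurable lborel"
    and G_nonneg: "\<And>x. 0 \<le> G x" and range: "\<And>x. \<eta> x \<in> {0..1}"
    and G_le: "\<And>x. \<eta> x \<noteq> 0 \<Longrightarrow> G x \<le> M"
  shows "Eq UNIV k (\<lambda>x. (\<eta> x)\<^sup>2 * (2*M - G x)) \<le> 2 * Eq UNIV k G + ennreal (32 * M\<^sup>2) * Eq UNIV k \<eta>"
proof -
  note [measurable] = kernel_std_measurable[OF k]
  have "ennreal (((\<eta> y)\<^sup>2 * (2*M - G y) - (\<eta> x)\<^sup>2 * (2*M - G x))\<^sup>2 * k x y)
      \<le> 2 * ennreal ((G y - G x)\<^sup>2 * k x y) + ennreal (32 * M\<^sup>2) * ennreal ((\<eta> y - \<eta> x)\<^sup>2 * k x y)"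
    for x y
  proof (cases "x = y")
    case False
    then have "0 \<le> k x y" by (rule kernel_std_nonneg[OF k])
    from mult_right_mono[OF cutoff_test_increment_bound this]
    have "((\<eta> y)\<^sup>2 * (2*M - G y) - (\<eta> x)\<^sup>2 * (2*M - G x))\<^sup>2 * k x y
        \<le> 2 * ((G y - G x)\<^sup>2 * k x y) + 32 * M\<^sup>2 * ((\<eta> y - \<eta> x)\<^sup>2 * k x y)"
      using G_nonneg range G_le by (simp add: algebra_simps)
    then have "ennreal (((\<eta> y)\<^sup>2 * (2*M - G y) - (\<eta> x)\<^sup>2 * (2*M - G x))\<^sup>2 * k x y)
        \<le> ennreal (2 * ((G y - G x)\<^sup>2 * k x y) + 32 * M\<^sup>2 * ((\<eta> y - \<eta> x)\<^sup>2 * k x y))"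
      by (rule ennreal_leI)
    also have "\<dots> = 2 * ennreal ((G y - G x)\<^sup>2 * k x y) + ennreal (32 * M\<^sup>2) * ennreal ((\<eta> y - \<eta> x)\<^sup>2 * k x y)"
      using kernel_std_increment_nonneg[OF k, where u=G and x=x and y=y]
        kernel_std_increment_nonneg[OF k, where u=\<eta> and x=x and y=y]
      by (simp add: ennreal_plus ennreal_mult')
    finally show ?thesis .
  qed simp
  then have "Eq UNIV k (\<lambda>x. (\<eta> x)\<^sup>2 * (2*M - G x))
      \<le> (\<integral>\<^sup>+x. \<integral>\<^sup>+y. 2 * ennreal ((G y - G x)\<^sup>2 * k x y)
            + ennreal (32 * M\<^sup>2) * ennreal ((\<eta> y - \<eta> x)\<^sup>2 * k x y) \<partial>lborel \<partial>lborel)"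
    unfolding Eq_UNIV by (intro nn_integral_mono)
  also have "\<dots> = 2 * Eq UNIV k G + ennreal (32 * M\<^sup>2) * Eq UNIV k \<eta>"
    unfolding Eq_UNIV by (simp add: nn_integral_add nn_integral_cmult)
  finally show ?thesis .
qed

section \<open>Caccioppoli estimate for the regularized Green function\<close>

lemma reg_green_cutoff_test_admissible:
  fixes k :: "'a::euclidean_space \<Rightarrow> 'a \<Rightarrow> real"
  assumes green: "is_reg_green k \<Omega> y0 \<rho> G" and k: "kernel_std k" and U1: "cond_U1 cU \<alpha> k"
    and lip: "L-lipschitz_on UNIV \<eta>" and "0 < L" and range: "\<And>x. \<eta> x \<in> {0..1}"
    and A_sets[measurable]: "A \<in> sets lborel" and A_fin: "emeasure lborel A < \<infinity>"
    and "A \<subseteq> \<Omega>" and supp: "\<And>x. x \<notin> A \<Longrightarrow> \<eta> x = 0"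
    and "0 < M" and G_le: "\<And>x. x \<in> A \<Longrightarrow> G x \<le> M"
  shows "H_Omega \<Omega> k (\<lambda>x. (\<eta> x)\<^sup>2 * (2*M - G x))"
proof -
  define \<phi> where "\<phi> x = (\<eta> x)\<^sup>2 * (2*M - G x)" for x
  have HG: "H_Omega \<Omega> k G" and G_nonneg: "\<And>x. 0 \<le> G x"
    using green unfolding is_reg_green_def by auto
  then have G_meas[measurable]: "G \<in> borel_measurable lborel" and EqG: "Eq UNIV k G < \<infinity>"
    unfolding H_Omega_def H_space_def L2on_def by auto
  note [measurable] = lipschitz_on_borel_measurable[OF lip]
  have \<phi>_bound: "(\<phi> x)\<^sup>2 \<le> (2*M)\<^sup>2 * indicator A x" for x
  proof (cases "x \<in> A")
    case True
    have "(\<eta> x)\<^sup>2 \<le> 1" using range[of x] by (simp add: power_le_one)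
    moreover have "0 \<le> 2*M - G x" "2*M - G x \<le> 2*M" using G_le[OF True] G_nonneg[of x] \<open>0 < M\<close> by auto
    ultimately have "0 \<le> \<phi> x" "\<phi> x \<le> 2*M"
      unfolding \<phi>_def using mult_mono[of "(\<eta> x)\<^sup>2" 1 "2*M - G x" "2*M"] by auto
    then have "(\<phi> x)\<^sup>2 \<le> (2*M)\<^sup>2" by (intro power_mono)
    then show ?thesis using True by simp
  qed (simp add: \<phi>_def supp)
  have "(\<integral>\<^sup>+x. indicator UNIV x * ennreal ((\<phi> x)\<^sup>2) \<partial>lborel) \<le> (\<integral>\<^sup>+x. ennreal ((2*M)\<^sup>2) * indicator A x \<partial>lborel)"
  proof (intro nn_integral_mono)
    fix x
    show "indicator UNIV x * ennreal ((\<phi> x)\<^sup>2) \<le> ennreal ((2*M)\<^sup>2) * indicator A x"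
      using \<phi>_bound[of x] by (cases "x \<in> A") (auto intro: ennreal_leI)
  qed
  also have "\<dots> = ennreal ((2*M)\<^sup>2) * emeasure lborel A" by (rule nn_integral_cmult_indicator[OF A_sets])
  also have "\<dots> < \<infinity>" using A_fin by (simp add: ennreal_mult_less_top less_top)
  finally have "L2on UNIV \<phi>" unfolding L2on_def \<phi>_def by simp
  have "Eq UNIV k \<eta> \<le> 2 * emeasure lborel A * ennreal (cU * L powr \<alpha>)"
    by (rule cutoff_energy_le[OF k U1 lip \<open>0 < L\<close> range A_sets supp])
  then have "Eq UNIV k \<eta> < \<infinity>" using A_fin by (simp add: ennreal_mult_less_top less_top le_less_trans)
  moreover have "Eq UNIV k \<phi> \<le> 2 * Eq UNIV k G + ennreal (32 * M\<^sup>2) * Eq UNIV k \<eta>"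
    unfolding \<phi>_def[abs_def] using G_le supp
    by (intro Eq_cutoff_test_function_le[OF k G_meas _ G_nonneg range]) auto
  ultimately have "Eq UNIV k \<phi> < \<infinity>"
    using EqG by (simp add: ennreal_mult_less_top less_top le_less_trans)
  moreover have "AE x in lborel. x \<notin> \<Omega> \<longrightarrow> \<phi> x = 0"
    using \<open>A \<subseteq> \<Omega>\<close> supp by (intro AE_I2) (auto simp: \<phi>_def)
  ultimately show ?thesis
    using \<open>L2on UNIV \<phi>\<close> unfolding H_Omega_def H_space_def \<phi>_def by simp
qed

lemma reg_green_tested_energy_le:
  fixes k :: "'a::euclidean_space \<Rightarrow> 'a \<Rightarrow> real"
  assumes green: "is_reg_green k \<Omega> y0 \<rho> G" and k: "kernel_std k" and U1: "cond_U1 cU \<alpha> k"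
    and lip: "L-lipschitz_on UNIV \<eta>" and "0 < L" and range: "\<And>x. \<eta> x \<in> {0..1}"
    and A_sets: "A \<in> sets lborel" and A_fin: "emeasure lborel A < \<infinity>"
    and "A \<subseteq> \<Omega>" and "A \<inter> ball y0 \<rho> = {}" and supp: "\<And>x. x \<notin> A \<Longrightarrow> \<eta> x = 0"
    and "0 < M" and G_le: "\<And>x. x \<in> A \<Longrightarrow> G x \<le> M"
  shows "ennreal M * (\<integral>\<^sup>+x. \<integral>\<^sup>+y. ennreal ((if \<eta> x = 0 then G x * (\<eta> y)\<^sup>2 else 0) * k x y) \<partial>lborel \<partial>lborel)
    \<le> ennreal (4 * M\<^sup>2) * Eq UNIV k \<eta>"
proof -
  define \<phi> where "\<phi> x = (\<eta> x)\<^sup>2 * (2*M - G x)" for x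
  define h where "h x y = (if \<eta> x = 0 then G x * (\<eta> y)\<^sup>2 else 0) * k x y" for x y
  have HG: "H_Omega \<Omega> k G" and G_nonneg: "\<And>x. 0 \<le> G x"
    and orth: "\<And>\<psi>. H_Omega \<Omega> k \<psi> \<Longrightarrow>
      Ebil k G \<psi> = (\<integral>x. indicator (ball y0 \<rho>) x * \<psi> x \<partial>lborel) / measure lborel (ball y0 \<rho>)"
    using green unfolding is_reg_green_def by auto
  then have [measurable]: "G \<in> borel_measurable lborel" and EqG: "Eq UNIV k G < \<infinity>"
    unfolding H_Omega_def H_space_def L2on_def by auto
  note [measurable] = kernel_std_measurable[OF k] lipschitz_on_borel_measurable[OF lip]
  have H\<phi>: "H_Omega \<Omega> k \<phi>"
    unfolding \<phi>_def[abs_def] using assms by (intro reg_green_cutoff_test_admissible) auto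
  have "(\<lambda>x. indicator (ball y0 \<rho>) x * \<phi> x) = (\<lambda>x. 0)"
    using \<open>A \<inter> ball y0 \<rho> = {}\<close> supp by (auto simp: indicator_def \<phi>_def fun_eq_iff disjoint_iff)
  then have "Ebil k G \<phi> = 0" using orth[OF H\<phi>] by simp
  moreover have "(\<integral>\<^sup>+x. \<integral>\<^sup>+y. ennreal \<bar>(G y - G x) * (\<phi> y - \<phi> x) * k x y\<bar> \<partial>lborel \<partial>lborel) < \<infinity>"
    using Ebil_integrand_abs_le[OF k, of G \<phi>] EqG H\<phi> unfolding H_Omega_def H_space_def
    by (simp add: \<phi>_def[abs_def] le_less_trans less_top)
  moreover have "M * h x y + (G y - G x) * (\<phi> y - \<phi> x) * k x y \<le> 4 * M\<^sup>2 * ((\<eta> y - \<eta> x)\<^sup>2 * k x y)" for x y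
  proof (cases "x = y")
    case False
    then have "0 \<le> k x y" by (rule kernel_std_nonneg[OF k])
    have G_le': "\<eta> z \<noteq> 0 \<Longrightarrow> G z \<le> M" for z using supp G_le by blast
    have "M * (if \<eta> x = 0 then G x * (\<eta> y)\<^sup>2 else 0) + (G y - G x) * (\<phi> y - \<phi> x)
        \<le> 4 * M\<^sup>2 * (\<eta> y - \<eta> x)\<^sup>2"
      unfolding \<phi>_def using G_nonneg range \<open>0 < M\<close> G_le' by (intro cutoff_test_pairing_bound) auto
    from mult_right_mono[OF this \<open>0 \<le> k x y\<close>] show ?thesis
      by (simp add: h_def algebra_simps)
  qed (simp add: h_def)
  moreover have "0 \<le> h x y" for x y
    using kernel_std_nonneg[OF k, of x y] G_nonneg[of x] by (cases "x = y") (auto simp: h_def)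
  ultimately have "(\<integral>\<^sup>+x. \<integral>\<^sup>+y. ennreal (M * h x y) \<partial>lborel \<partial>lborel)
      \<le> (\<integral>\<^sup>+x. \<integral>\<^sup>+y. ennreal (4 * M\<^sup>2 * ((\<eta> y - \<eta> x)\<^sup>2 * k x y)) \<partial>lborel \<partial>lborel)"
    using \<open>0 < M\<close>
    by (intro lborel_pair.iterated_nn_integral_le_if_integral_zero[where f="\<lambda>x y. (G y - G x) * (\<phi> y - \<phi> x) * k x y"])
       (auto simp: h_def \<phi>_def Ebil_def)
  then show ?thesis
    unfolding Eq_UNIV using \<open>0 < M\<close> kernel_std_increment_nonneg[OF k]
    by (simp add: ennreal_mult' nn_integral_cmult h_def)
qed

lemma reg_green_caccioppoli:
  fixes k :: "'a::euclidean_space \<Rightarrow> 'a \<Rightarrow> real"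
  assumes green: "is_reg_green k \<Omega> y0 \<rho> G" and k: "kernel_std k" and U1: "cond_U1 cU \<alpha> k"
    and lip: "L-lipschitz_on UNIV \<eta>" and "0 < L" and range: "\<And>x. \<eta> x \<in> {0..1}"
    and A_sets: "A \<in> sets lborel" and A_fin: "emeasure lborel A < \<infinity>"
    and "A \<subseteq> \<Omega>" and "A \<inter> ball y0 \<rho> = {}" and supp: "\<And>x. x \<notin> A \<Longrightarrow> \<eta> x = 0"
    and "0 < M" and G_le: "\<And>x. x \<in> A \<Longrightarrow> G x \<le> M"
  shows "(\<integral>\<^sup>+x. indicator (- A) x * (\<integral>\<^sup>+y. indicator A y * ennreal (G x * (\<eta> y)\<^sup>2 * k x y) \<partial>lborel) \<partial>lborel)
    \<le> ennreal (8 * M) * emeasure lborel A * ennreal (cU * L powr \<alpha>)"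
    (is "?T \<le> ?B")
proof -
  define H where
    "H = (\<integral>\<^sup>+x. \<integral>\<^sup>+y. ennreal ((if \<eta> x = 0 then G x * (\<eta> y)\<^sup>2 else 0) * k x y) \<partial>lborel \<partial>lborel)"
  have T_le: "?T \<le> H"
    unfolding H_def
  proof (intro nn_integral_mono)
    fix x
    show "indicator (- A) x * (\<integral>\<^sup>+y. indicator A y * ennreal (G x * (\<eta> y)\<^sup>2 * k x y) \<partial>lborel)
        \<le> (\<integral>\<^sup>+y. ennreal ((if \<eta> x = 0 then G x * (\<eta> y)\<^sup>2 else 0) * k x y) \<partial>lborel)"
      by (cases "x \<in> A") (auto simp: supp intro!: nn_integral_mono simp: indicator_def)
  qed
  have "ennreal M * H \<le> ennreal (4 * M\<^sup>2) * Eq UNIV k \<eta>"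
    unfolding H_def using assms by (rule reg_green_tested_energy_le)
  also have "\<dots> \<le> ennreal (4 * M\<^sup>2) * (2 * emeasure lborel A * ennreal (cU * L powr \<alpha>))"
    using cutoff_energy_le[OF k U1 lip \<open>0 < L\<close> range A_sets supp] by (rule mult_left_mono) auto
  also have "\<dots> = ennreal M * ?B"
  proof -
    have "ennreal (4 * M\<^sup>2) * 2 = ennreal M * ennreal (8 * M)"
      using \<open>0 < M\<close>
      by (simp add: ennreal_mult[symmetric] ennreal_numeral[symmetric] power2_eq_square del: ennreal_numeral)
    then show ?thesis by (metis mult.assoc)
  qed
  finally have "H \<le> ?B" using \<open>0 < M\<close> by (simp add: ennreal_mult_le_mult_iff)
  with T_le show ?thesis by (rule order_trans)
qed

lemma reg_green_SUP_annulus: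
  assumes "is_reg_green k \<Omega> y0 \<rho> G" and "cball y0 R \<subseteq> \<Omega>" and "\<rho> < s"
  obtains M where "0 \<le> M" and "(SUP x\<in>annulus y0 R s. ennreal (G x)) = ennreal M"
proof -
  have "continuous_on (cball y0 R - ball y0 s) G"
    using assms unfolding is_reg_green_def by (elim conjE continuous_on_subset) auto
  moreover have "compact (cball y0 R - ball y0 s)" by (simp add: compact_diff)
  moreover have "annulus y0 R s \<subseteq> cball y0 R - ball y0 s" unfolding annulus_def by auto
  ultimately show ?thesis using that by (rule SUP_ennreal_continuous_compact)
qed

lemma reg_green_annulus_estimate:
  fixes k :: "'a::euclidean_space \<Rightarrow> 'a \<Rightarrow> real" and y0 :: 'a and r \<epsilon> :: real
  defines "A \<equiv> annulus y0 (3 * r / 2) (\<epsilon> * r / 2)"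
  assumes "0 \<le> cU" "0 < \<epsilon>" "\<epsilon> \<le> 4" "\<alpha> \<le> 2"
    and k: "kernel_std k" and U1: "cond_U1 cU \<alpha> k"
    and "y0 \<in> \<Omega>" and r_dist: "r < infdist y0 (frontier \<Omega>) / 2"
    and "0 < \<rho>" "\<rho> < \<epsilon> * r / 2" and green: "is_reg_green k \<Omega> y0 \<rho> G"
    and smooth: "smooth_fun \<eta>" and range: "\<And>x. 0 \<le> \<eta> x \<and> \<eta> x \<le> 1"
    and supp: "\<And>x. x \<notin> A \<Longrightarrow> \<eta> x = 0"
    and grad: "\<And>x. onorm (frechet_derivative \<eta> (at x)) \<le> 4 / \<epsilon> * r powr (-1)"
  shows "(\<integral>\<^sup>+x. indicator (- A) x * (\<integral>\<^sup>+y. indicator A y * ennreal (G x * (\<eta> y)\<^sup>2 * k x y) \<partial>lborel) \<partial>lborel)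
    \<le> ennreal (8 * cU * unit_ball_vol DIM('a) * (3/2) ^ DIM('a) * (4/\<epsilon>)\<^sup>2 * r powr (real DIM('a) - \<alpha>))
       * (SUP x\<in>A. ennreal (G x))"
    (is "?T \<le> ennreal ?C * _")
proof -
  define V where "V = unit_ball_vol DIM('a) * (3 * r / 2) ^ DIM('a)"
  define L where "L = 4 / \<epsilon> * r powr (-1)"
  have "0 < \<epsilon> * r" using \<open>0 < \<rho>\<close> \<open>\<rho> < \<epsilon> * r / 2\<close> by linarith
  then have "0 < r" using \<open>0 < \<epsilon>\<close> by (simp add: zero_less_mult_iff)
  then have "0 < L" unfolding L_def using \<open>0 < \<epsilon>\<close> by simp
  have lip: "L-lipschitz_on UNIV \<eta>" unfolding L_def using smooth grad by (rule smooth_fun_lipschitz_on)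
  have A_sets: "A \<in> sets lborel" unfolding A_def annulus_def by simp
  have A_le: "emeasure lborel A \<le> ennreal V"
    unfolding A_def V_def using \<open>0 < r\<close> by (intro emeasure_annulus_le) simp
  then have A_fin: "emeasure lborel A < \<infinity>" using ennreal_less_top le_less_trans by (metis infinity_ennreal_def)
  have "cball y0 (3 * r / 2) \<subseteq> \<Omega>"
    using ball_infdist_frontier_subset[OF \<open>y0 \<in> \<Omega>\<close>] r_dist \<open>0 < r\<close> by (auto simp: subset_eq)
  then have "A \<subseteq> \<Omega>" unfolding A_def annulus_def by auto
  have "A \<inter> ball y0 \<rho> = {}" using \<open>\<rho> < \<epsilon> * r / 2\<close> unfolding A_def annulus_def by auto
  obtain s where "0 \<le> s" and S: "(SUP x\<in>A. ennreal (G x)) = ennreal s"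
    using reg_green_SUP_annulus[OF green \<open>cball y0 (3 * r / 2) \<subseteq> \<Omega>\<close> \<open>\<rho> < \<epsilon> * r / 2\<close>]
    unfolding A_def by blast
  have "L powr \<alpha> = (4/\<epsilon>) powr \<alpha> * r powr (- \<alpha>)"
    unfolding L_def using \<open>0 < r\<close> \<open>0 < \<epsilon>\<close> by (simp add: powr_divide powr_minus powr_mult divide_simps)
  also have "\<dots> \<le> (4/\<epsilon>)\<^sup>2 * r powr (- \<alpha>)"
    using powr_mono[of \<alpha> 2 "4/\<epsilon>"] \<open>\<alpha> \<le> 2\<close> \<open>0 < \<epsilon>\<close> \<open>\<epsilon> \<le> 4\<close>
    by (intro mult_right_mono) (simp_all add: powr_numeral)
  finally have L_powr: "L powr \<alpha> \<le> (4/\<epsilon>)\<^sup>2 * r powr (- \<alpha>)" .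
  have "?T \<le> ennreal (?C * s)"
  proof (rule ennreal_le_mult_if_le_all_greater)
    fix M assume "s < M"
    have "G x \<le> M" if "x \<in> A" for x
      using SUP_upper[OF that, of "\<lambda>x. ennreal (G x)"] \<open>s < M\<close> \<open>0 \<le> s\<close> by (simp add: S)
    then have "?T \<le> ennreal (8 * M) * emeasure lborel A * ennreal (cU * L powr \<alpha>)"
      using \<open>0 \<le> s\<close> \<open>s < M\<close> range supp
      by (intro reg_green_caccioppoli[OF green k U1 lip \<open>0 < L\<close> _ A_sets A_fin \<open>A \<subseteq> \<Omega>\<close> \<open>A \<inter> ball y0 \<rho> = {}\<close>])
         auto
    also have "\<dots> \<le> ennreal (8 * M) * ennreal V * ennreal (cU * ((4/\<epsilon>)\<^sup>2 * r powr (- \<alpha>)))"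
      using A_le L_powr \<open>0 \<le> cU\<close> by (intro mult_mono ennreal_leI mult_left_mono) auto
    also have "\<dots> = ennreal (?C * M)"
    proof -
      have "r ^ DIM('a) * r powr (- \<alpha>) = r powr (real DIM('a) - \<alpha>)"
        using \<open>0 < r\<close> by (simp add: powr_diff powr_realpow powr_minus divide_simps)
      then show ?thesis
        using \<open>0 \<le> s\<close> \<open>s < M\<close> \<open>0 \<le> cU\<close> \<open>0 < r\<close>
        by (simp add: V_def ennreal_mult'[symmetric] power_mult_distrib power_divide mult_ac)
    qed
    finally show "?T \<le> ennreal (?C * M)" .
  qed (use \<open>0 \<le> cU\<close> \<open>0 \<le> s\<close> in simp_all)
  then show ?thesis using \<open>0 \<le> s\<close> \<open>0 < r\<close> \<open>0 \<le> cU\<close> by (simp add: S ennreal_mult)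
qed

theorem mainTheorem15:
  fixes \<alpha>0 cl cU \<epsilon> :: real
  assumes dim: "DIM('a::euclidean_space) \<ge> 3"
    and "0 < \<alpha>0" and "0 < cl" and "0 < cU"
    and "0 < \<epsilon>" and "\<epsilon> < 1/2"
    and small_term: "\<And>\<alpha> (k :: 'a \<Rightarrow> 'a \<Rightarrow> real) \<Omega> G y0 r \<rho>.
       \<alpha>0 \<le> \<alpha> \<Longrightarrow> \<alpha> < 2 \<Longrightarrow> kernel_std k \<Longrightarrow> cond_Ege cl \<alpha> k \<Longrightarrow> cond_U1 cU \<alpha> k \<Longrightarrow>
       bounded \<Omega> \<Longrightarrow> open \<Omega> \<Longrightarrow> y0 \<in> \<Omega> \<Longrightarrow> r < infdist y0 (frontier \<Omega>) \<Longrightarrow>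
       0 < \<rho> \<Longrightarrow> ball y0 \<rho> \<subseteq> \<Omega> \<Longrightarrow> is_reg_green k \<Omega> y0 \<rho> G \<Longrightarrow>
       (\<integral>\<^sup>+ x. indicator (ball y0 (\<epsilon> * r)) x *
          (\<integral>\<^sup>+ y. indicator (- ball y0 r) y * ennreal (G x * k x y) \<partial>lborel) \<partial>lborel) \<le> 1/4"
  shows "\<exists>C. \<forall>\<alpha> (k :: 'a \<Rightarrow> 'a \<Rightarrow> real) \<Omega> G y0 r \<rho> \<eta>.
       \<alpha>0 \<le> \<alpha> \<and> \<alpha> < 2 \<and> kernel_std k \<and> cond_Ege cl \<alpha> k \<and> cond_U1 cU \<alpha> k \<and>
       bounded \<Omega> \<and> open \<Omega> \<and> y0 \<in> \<Omega> \<and> r < infdist y0 (frontier \<Omega>) / 2 \<and>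
       0 < \<rho> \<and> \<rho> < \<epsilon> * r / 2 \<and> is_reg_green k \<Omega> y0 \<rho> G \<and>
       smooth_fun \<eta> \<and> (\<forall>x. 0 \<le> \<eta> x \<and> \<eta> x \<le> 1) \<and>
       (\<forall>x\<in>annulus y0 r (\<epsilon> * r). \<eta> x = 1) \<and>
       (\<forall>x. x \<notin> annulus y0 (3 * r / 2) (\<epsilon> * r / 2) \<longrightarrow> \<eta> x = 0) \<and>
       (\<forall>x. onorm (frechet_derivative \<eta> (at x)) \<le> 4 / \<epsilon> * r powr (-1))
     \<longrightarrow>
       (\<integral>\<^sup>+ x. indicator (- annulus y0 (3 * r / 2) (\<epsilon> * r / 2)) x *
          (\<integral>\<^sup>+ y. indicator (annulus y0 (3 * r / 2) (\<epsilon> * r / 2)) y *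
              ennreal (G x * (\<eta> y)\<^sup>2 * k x y) \<partial>lborel) \<partial>lborel)
         \<le> ennreal (C * r powr (real DIM('a) - \<alpha>)) *
            (SUP x\<in>annulus y0 (3 * r / 2) (\<epsilon> * r / 2). ennreal (G x))
     \<and>
       (\<integral>\<^sup>+ x. indicator (- annulus y0 (3 * r / 2) (\<epsilon> * r / 2)) x *
          (\<integral>\<^sup>+ y. indicator (annulus y0 r (\<epsilon> * r)) y *
              ennreal (G x * k x y) \<partial>lborel) \<partial>lborel)
         \<le> ennreal (C * r powr (real DIM('a) - \<alpha>)) *
            (SUP x\<in>annulus y0 (3 * r / 2) (\<epsilon> * r / 2). ennreal (G x))"
proof -
  define C where "C = 8 * cU * unit_ball_vol DIM('a) * (3/2) ^ DIM('a) * (4/\<epsilon>)\<^sup>2"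
  have r_pos: "0 < r" if "0 < \<rho>" "\<rho> < \<epsilon> * r / 2" for r \<rho>
    using that \<open>0 < \<epsilon>\<close> zero_less_mult_iff[of \<epsilon> r] by linarith
  show ?thesis
    apply (intro exI[of _ C] allI impI; elim conjE)
    apply (rule context_conjI)
    subgoal
      unfolding C_def using \<open>0 < cU\<close> \<open>0 < \<epsilon>\<close> \<open>\<epsilon> < 1/2\<close>
      by (intro reg_green_annulus_estimate) auto
    subgoal for \<alpha> k \<Omega> G y0 r \<rho> \<eta>
      by (erule order_trans[rotated], intro nn_integral_inner_le_cutoff annulus_mono)
         (use r_pos[of \<rho> r] \<open>0 < \<epsilon>\<close> in auto)
    done
qed

end
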